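(* Let $d\ge2$. (a) Fix $n\ge2$ and let $\Sigma(\cdot)$ be a singularly affine equivariant scatter functional defined on all empirical measures $P_n=n^{-1}\sum_{j=1}^n\delta_{X_j}$ on $\mathbb{R}^d$ (with arbitrary, not necessarily distinct, $X_j\in\mathbb{R}^d$). For a $d\times n$ data matrix $X$ with $j$th column $X_j$, write $\Sigma(X):=\Sigma(P_n)$, let $\bar X:=n^{-1}\sum_{j=1}^nX_j$ and $\mathbf{1}_n$ the $n\times1$ vector of ones. Then there is a constant $c_n\ge0$, depending on $\Sigma(\cdot)$, such that for every $d\times n$ matrix $X$, $$\Sigma(X-\bar X\mathbf{1}_n')=c_n\,(X-\bar X\mathbf{1}_n')(X-\bar X\mathbf{1}_n')'.$$ (b) If $\Sigma(\cdot)$ is an affinely equivariant scatter functional defined for all $n$ and all empirical measures $P_n$ on $\mathbb{R}^d$, and is weakly continuous as a function of $P_n$, then $\Sigma\equiv0$.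
   Context: $\mathcal{N}_d$ denotes the set of $d\times d$ nonnegative definite symmetric matrices. A functional $Q\mapsto\Sigma(Q)\in\mathcal{N}_d$ on a set $\mathcal{D}$ of Borel probability measures on $\mathbb{R}^d$ is an affinely equivariant scatter functional iff for every nonsingular $d\times d$ matrix $A$ and $v\in\mathbb{R}^d$, with $f(x)=Ax+v$, and every $Q\in\mathcal{D}$, the image law $Q\circ f^{-1}$ is in $\mathcal{D}$ and $\Sigma(Q\circ f^{-1})=A\Sigma(Q)A'$. It is singularly affine equivariant if the same holds for all $d\times d$ matrices $A$, possibly singular. *)

theory Defs
  imports "HOL-Probability.Probability"
begin

definition nnd_matrix :: "real^'d^'d \<Rightarrow> bool" where
  "nnd_matrix M \<longleftrightarrow> transpose M = M \<and> (\<forall>x. 0 \<le> x \<bullet> (M *v x))"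

definition affine_image :: "real^'d^'d \<Rightarrow> real^'d \<Rightarrow> (real^'d) measure \<Rightarrow> (real^'d) measure" where
  "affine_image A v Q = distr Q borel (\<lambda>x. A *v x + v)"

definition scatter_functional :: "(real^'d) measure set \<Rightarrow> ((real^'d) measure \<Rightarrow> real^'d^'d) \<Rightarrow> bool" where
  "scatter_functional D S \<longleftrightarrow> (\<forall>Q\<in>D. nnd_matrix (S Q))"

definition affinely_equivariant :: "(real^'d) measure set \<Rightarrow> ((real^'d) measure \<Rightarrow> real^'d^'d) \<Rightarrow> bool" where
  "affinely_equivariant D S \<longleftrightarrow> scatter_functional D S \<and>
     (\<forall>Q\<in>D. \<forall>A v. invertible A \<longrightarrow>
        affine_image A v Q \<in> D \<and> S (affine_image A v Q) = A ** S Q ** transpose A)"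

definition singularly_affinely_equivariant :: "(real^'d) measure set \<Rightarrow> ((real^'d) measure \<Rightarrow> real^'d^'d) \<Rightarrow> bool" where
  "singularly_affinely_equivariant D S \<longleftrightarrow> scatter_functional D S \<and>
     (\<forall>Q\<in>D. \<forall>A v.
        affine_image A v Q \<in> D \<and> S (affine_image A v Q) = A ** S Q ** transpose A)"

definition empirical :: "'i set \<Rightarrow> ('i \<Rightarrow> real^'d) \<Rightarrow> (real^'d) measure" where
  "empirical I X = distr (measure_pmf (pmf_of_set I)) borel X"

definition data_emp :: "real^'n::finite^'d \<Rightarrow> (real^'d) measure" where
  "data_emp X = empirical UNIV (\<lambda>j. column j X)"

definition col_mean :: "real^'n::finite^'d \<Rightarrow> real^'d" where
  "col_mean X = (1 / real CARD('n)) *\<^sub>R (\<Sum>j\<in>UNIV. column j X)"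

definition centered :: "real^'n::finite^'d \<Rightarrow> real^'n^'d" where
  "centered X = (\<chi> i j. X $ i $ j - col_mean X $ i)"

definition all_empirical :: "(real^'d) measure set" where
  "all_empirical = {empirical {..<n} (X :: nat \<Rightarrow> real^'d) | n X. n \<ge> 1}"

definition weak_conv :: "(nat \<Rightarrow> (real^'d) measure) \<Rightarrow> (real^'d) measure \<Rightarrow> bool" where
  "weak_conv Qs Q \<longleftrightarrow> (\<forall>f :: real^'d \<Rightarrow> real. continuous_on UNIV f \<and> bounded (range f) \<longrightarrow>
      (\<lambda>k. integral\<^sup>L (Qs k) f) \<longlonglongrightarrow> integral\<^sup>L Q f)"

text \<open>Weak continuity of S on the domain D (sequential; the weak topology is metrizable).\<close>
definition weakly_continuous_on :: "(real^'d) measure set \<Rightarrow> ((real^'d) measure \<Rightarrow> real^'d^'d) \<Rightarrow> bool" where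
  "weakly_continuous_on D S \<longleftrightarrow>
     (\<forall>Qs Q. (\<forall>k. Qs k \<in> D) \<and> Q \<in> D \<and> weak_conv Qs Q \<longrightarrow> (\<lambda>k. S (Qs k)) \<longlonglongrightarrow> S Q)"

end

theory Submission
  imports Defs
begin

text \<open>
  For data Y and a direction a, equivariance under the rank-one map x \<mapsto> (a \<bullet> x) e shows
  that a' S(Y) a depends only on the projected sample a \<bullet> Y. As a function of the projected
  sample it is a quadratic form (restrict the data to a plane), nonnegative and invariant under
  permutations and translations of the sample; every such form is c times the sum of squared
  deviations from the mean, which gives (a).
  Under equivariance for invertible maps only, the rank-one identity is recovered in the limit by
  weak continuity, so every sample size N has such a coefficient c N. If c N > 0, a single outlier
  at a suitable distance gives the scatter of N points a unit diagonal entry, although these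
  samples converge weakly to a point mass, whose scatter is 0 by scale invariance. Hence c N = 0
  for all large N, and every empirical measure is a sample of arbitrarily large size once its
  points are replicated.
\<close>

section \<open>Quadratic functions of a sample\<close>

definition plane_quadratic :: "(('i \<Rightarrow> real) \<Rightarrow> real) \<Rightarrow> bool" where
  "plane_quadratic g \<longleftrightarrow>
     (\<forall>u v. \<exists>p q r. \<forall>\<alpha> \<beta>. g (\<lambda>i. \<alpha> * u i + \<beta> * v i) = p * \<alpha>\<^sup>2 + q * \<alpha> * \<beta> + r * \<beta>\<^sup>2)"

definition polar :: "(('i \<Rightarrow> real) \<Rightarrow> real) \<Rightarrow> ('i \<Rightarrow> real) \<Rightarrow> ('i \<Rightarrow> real) \<Rightarrow> real" where
  "polar g x z = (g (\<lambda>i. x i + z i) - g (\<lambda>i. x i - z i)) / 4"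

lemma plane_quadratic_coeffs:
  assumes "plane_quadratic g"
  obtains q where "\<And>\<alpha> \<beta>. g (\<lambda>i. \<alpha> * u i + \<beta> * v i) = g u * \<alpha>\<^sup>2 + q * \<alpha> * \<beta> + g v * \<beta>\<^sup>2"
proof -
  obtain p q r where pqr: "\<And>\<alpha> \<beta>. g (\<lambda>i. \<alpha> * u i + \<beta> * v i) = p * \<alpha>\<^sup>2 + q * \<alpha> * \<beta> + r * \<beta>\<^sup>2"
    using assms unfolding plane_quadratic_def by blast
  have "g u = p" "g v = r"
    using pqr[of 1 0] pqr[of 0 1] by simp_all
  with pqr that show ?thesis by blast
qed

lemma plane_quadratic_scale:
  assumes "plane_quadratic g"
  shows "g (\<lambda>i. a * x i) = a\<^sup>2 * g x"
proof -
  obtain q where "\<And>\<alpha> \<beta>. g (\<lambda>i. \<alpha> * x i + \<beta> * x i) = g x * \<alpha>\<^sup>2 + q * \<alpha> * \<beta> + g x * \<beta>\<^sup>2"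
    using plane_quadratic_coeffs[OF assms] by blast
  from this[of a 0] show ?thesis by (simp add: mult.commute)
qed

lemma polar_diag:
  assumes "plane_quadratic g"
  shows "polar g x x = g x"
proof -
  have "(\<lambda>i. x i + x i) = (\<lambda>i. 2 * x i)" "(\<lambda>i. x i - x i) = (\<lambda>i. 0 * x i)"
    by auto
  then show ?thesis
    using plane_quadratic_scale[OF assms, of 2 x] plane_quadratic_scale[OF assms, of 0 x]
    by (simp add: polar_def)
qed

lemma polar_commute:
  assumes "plane_quadratic g"
  shows "polar g x z = polar g z x"
proof -
  have "g (\<lambda>i. x i - z i) = g (\<lambda>i. z i - x i)"
    using plane_quadratic_scale[OF assms, of "-1" "\<lambda>i. z i - x i"] by simp
  moreover have "(\<lambda>i. x i + z i) = (\<lambda>i. z i + x i)"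
    by (simp add: add.commute)
  ultimately show ?thesis
    by (simp add: polar_def)
qed

lemma polar_scale_left:
  assumes "plane_quadratic g"
  shows "polar g (\<lambda>i. a * x i) z = a * polar g x z"
proof -
  obtain q where q: "\<And>\<alpha> \<beta>. g (\<lambda>i. \<alpha> * x i + \<beta> * z i) = g x * \<alpha>\<^sup>2 + q * \<alpha> * \<beta> + g z * \<beta>\<^sup>2"
    using plane_quadratic_coeffs[OF assms] by blast
  have "polar g (\<lambda>i. a * x i) z = a * q / 2"
    using q[of a 1] q[of a "-1"] by (simp add: polar_def algebra_simps)
  moreover have "polar g x z = q / 2"
    using q[of 1 1] q[of 1 "-1"] by (simp add: polar_def algebra_simps)
  ultimately show ?thesis by (metis times_divide_eq_right)
qed

text \<open>The parallelogram law, applied at the midpoint and half-difference of x and y.\<close>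
lemma polar_add_left:
  assumes "plane_quadratic g"
  shows "polar g (\<lambda>i. x i + y i) z = polar g x z + polar g y z"
proof -
  have parallelogram: "g (\<lambda>i. u i + v i) + g (\<lambda>i. u i - v i) = 2 * g u + 2 * g v" for u v
  proof -
    obtain q where q: "\<And>\<alpha> \<beta>. g (\<lambda>i. \<alpha> * u i + \<beta> * v i) = g u * \<alpha>\<^sup>2 + q * \<alpha> * \<beta> + g v * \<beta>\<^sup>2"
      using plane_quadratic_coeffs[OF assms] by blast
    from q[of 1 1] q[of 1 "-1"] show ?thesis by simp
  qed
  define m where "m i = (x i + y i) / 2" for i
  define h where "h i = (x i - y i) / 2" for i
  have halves: "(\<lambda>i. m i + z i + h i) = (\<lambda>i. x i + z i)" "(\<lambda>i. m i + z i - h i) = (\<lambda>i. y i + z i)"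
    "(\<lambda>i. m i - z i + h i) = (\<lambda>i. x i - z i)" "(\<lambda>i. m i - z i - h i) = (\<lambda>i. y i - z i)"
    "(\<lambda>i. 2 * m i) = (\<lambda>i. x i + y i)"
    by (auto simp: m_def h_def field_simps)
  have "g (\<lambda>i. x i + z i) + g (\<lambda>i. y i + z i) = 2 * g (\<lambda>i. m i + z i) + 2 * g h"
    using parallelogram[of "\<lambda>i. m i + z i" h] unfolding halves .
  moreover have "g (\<lambda>i. x i - z i) + g (\<lambda>i. y i - z i) = 2 * g (\<lambda>i. m i - z i) + 2 * g h"
    using parallelogram[of "\<lambda>i. m i - z i" h] unfolding halves .
  moreover have "polar g (\<lambda>i. x i + y i) z = 2 * polar g m z"
    using polar_scale_left[OF assms, of 2 m z] unfolding halves .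
  ultimately show ?thesis unfolding polar_def by argo
qed

lemma polar_sum_left:
  assumes "plane_quadratic g" and "finite K"
  shows "polar g (\<lambda>i. \<Sum>k\<in>K. c k * f k i) z = (\<Sum>k\<in>K. c k * polar g (f k) z)"
  using assms(2)
proof (induction K rule: finite_induct)
  case empty
  then show ?case using polar_scale_left[OF assms(1), of 0 z z] by simp
next
  case (insert k K)
  then show ?case
    by (simp add: polar_add_left[OF assms(1)] polar_scale_left[OF assms(1)])
qed

lemma plane_quadratic_expansion:
  fixes g :: "('i \<Rightarrow> real) \<Rightarrow> real"
  assumes "plane_quadratic g" and "finite I"
  shows "g (\<lambda>i. \<Sum>k\<in>I. w k * indicator {k} i) =
    (\<Sum>k\<in>I. \<Sum>l\<in>I. w k * w l * polar g (indicator {k}) (indicator {l}))"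
proof -
  let ?W = "\<lambda>i. \<Sum>k\<in>I. w k * indicator {k} i :: real"
  have "g ?W = polar g ?W ?W"
    by (rule polar_diag[OF assms(1), symmetric])
  also have "\<dots> = (\<Sum>k\<in>I. w k * polar g (indicator {k}) ?W)"
    by (rule polar_sum_left[OF assms])
  also have "\<dots> = (\<Sum>k\<in>I. w k * (\<Sum>l\<in>I. w l * polar g (indicator {l}) (indicator {k})))"
    by (subst polar_commute[OF assms(1)]) (simp only: polar_sum_left[OF assms])
  also have "\<dots> = (\<Sum>k\<in>I. \<Sum>l\<in>I. w l * w k * polar g (indicator {l}) (indicator {k}))"
    by (simp add: sum_distrib_left mult_ac)
  also have "\<dots> = (\<Sum>k\<in>I. \<Sum>l\<in>I. w k * w l * polar g (indicator {k}) (indicator {l}))"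
    by (rule sum.swap)
  finally show ?thesis .
qed

lemma polar_permute:
  assumes perm: "\<And>y. g (y \<circ> \<sigma>) = g y"
  shows "polar g (x \<circ> \<sigma>) (z \<circ> \<sigma>) = polar g x z"
  using perm[of "\<lambda>i. x i + z i"] perm[of "\<lambda>i. x i - z i"] by (simp add: polar_def comp_def)

lemma indicator_singleton_comp_permutes:
  assumes "\<sigma> permutes I"
  shows "indicator {\<sigma> k} \<circ> \<sigma> = (indicator {k} :: 'i \<Rightarrow> real)"
  using permutes_inj[OF assms] by (auto simp: indicator_def inj_eq)

lemma polar_indicator_diag_eq:
  assumes perm: "\<And>\<sigma> y. \<sigma> permutes I \<Longrightarrow> g (y \<circ> \<sigma>) = g y" and "k \<in> I" "l \<in> I"
  shows "polar g (indicator {k}) (indicator {k}) = polar g (indicator {l}) (indicator {l})"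
proof -
  have \<sigma>: "Transposition.transpose k l permutes I"
    by (rule permutes_swap_id) fact+
  show ?thesis
    using polar_permute[where g = g and \<sigma> = "Transposition.transpose k l", OF perm[OF \<sigma>],
        of "indicator {l}" "indicator {l}"]
    unfolding indicator_singleton_comp_permutes[OF \<sigma>, of k, symmetric] by simp
qed

lemma polar_indicator_offdiag_eq:
  assumes perm: "\<And>\<sigma> y. \<sigma> permutes I \<Longrightarrow> g (y \<circ> \<sigma>) = g y"
    and "k \<in> I" "l \<in> I" "k \<noteq> l" "k' \<in> I" "l' \<in> I" "k' \<noteq> l'"
  shows "polar g (indicator {k}) (indicator {l}) = polar g (indicator {k'}) (indicator {l'})"
proof -
  define l1 where "l1 = Transposition.transpose k k' l"
  define \<sigma> where "\<sigma> = Transposition.transpose l1 l' \<circ> Transposition.transpose k k'"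
  have "l1 \<in> I"
    using assms(2,3,5) by (simp add: l1_def Transposition.transpose_def)
  have "l1 \<noteq> k'"
    using assms(4) by (auto simp: l1_def Transposition.transpose_def)
  have \<sigma>: "\<sigma> permutes I" "\<sigma> k = k'" "\<sigma> l = l'"
    using assms(5,6,7) \<open>l1 \<in> I\<close> \<open>l1 \<noteq> k'\<close>
    by (simp_all add: \<sigma>_def l1_def permutes_compose permutes_swap_id assms(2,5))
  show ?thesis
    using polar_permute[where g = g and \<sigma> = \<sigma>, OF perm[OF \<sigma>(1)], of "indicator {k'}" "indicator {l'}"]
    unfolding \<sigma>(2,3)[symmetric] indicator_singleton_comp_permutes[OF \<sigma>(1)] .
qed

definition sum_sq_dev :: "'i set \<Rightarrow> ('i \<Rightarrow> real) \<Rightarrow> real" where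
  "sum_sq_dev I y = (\<Sum>i\<in>I. (y i - (\<Sum>j\<in>I. y j) / card I)\<^sup>2)"

lemma sum_sq_dev_indicator_pos:
  assumes "finite I" "card I \<ge> 2" "k \<in> I"
  shows "sum_sq_dev I (indicator {k}) > 0"
proof -
  have "(\<Sum>j\<in>I. indicator {k} j :: real) = 1"
    using assms by (simp add: indicator_def sum.delta')
  moreover have "(indicator {k} k - 1 / card I)\<^sup>2 > (0::real)"
    using assms(2) by simp
  ultimately show ?thesis
    unfolding sum_sq_dev_def using assms by (intro sum_pos2[of _ k]) auto
qed

lemma sum_sq_dev_scale: "sum_sq_dev I (\<lambda>i. r * y i) = r\<^sup>2 * sum_sq_dev I y"
proof -
  have "r * y i - (\<Sum>j\<in>I. r * y j) / card I = r * (y i - (\<Sum>j\<in>I. y j) / card I)" for i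
    by (simp add: sum_distrib_left[symmetric] right_diff_distrib)
  then show ?thesis
    by (simp add: sum_sq_dev_def power_mult_distrib sum_distrib_left)
qed

lemma double_sum_diag_offdiag:
  fixes w :: "'i \<Rightarrow> real"
  assumes "finite I"
  shows "(\<Sum>k\<in>I. \<Sum>l\<in>I. w k * w l * (if k = l then \<alpha> else \<beta>)) =
    \<beta> * (\<Sum>k\<in>I. w k)\<^sup>2 + (\<alpha> - \<beta>) * (\<Sum>k\<in>I. (w k)\<^sup>2)"
proof -
  have "w k * w l * (if k = l then \<alpha> else \<beta>) = \<beta> * (w k * w l) + (if k = l then (\<alpha> - \<beta>) * (w k)\<^sup>2 else 0)"
    for k l by (cases "k = l") (simp_all add: algebra_simps power2_eq_square)
  then show ?thesis
    using assms by (simp add: sum.distrib sum_distrib_left sum_distrib_right power2_eq_square mult_ac)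
qed

lemma polar_indicator_eq_if:
  fixes g :: "('i \<Rightarrow> real) \<Rightarrow> real"
  assumes fin: "finite I" and card: "card I \<ge> 2"
    and perm: "\<And>\<sigma> y. \<sigma> permutes I \<Longrightarrow> g (y \<circ> \<sigma>) = g y"
  obtains \<alpha> \<beta> where
    "\<And>k l. k \<in> I \<Longrightarrow> l \<in> I \<Longrightarrow> polar g (indicator {k}) (indicator {l}) = (if k = l then \<alpha> else \<beta>)"
proof -
  obtain i0 j0 where ij: "i0 \<in> I" "j0 \<in> I" "i0 \<noteq> j0"
  proof -
    have "\<not> card I \<le> Suc 0"
      using card by simp
    with that show ?thesis
      unfolding card_le_Suc0_iff_eq[OF fin] by blast
  qed
  show ?thesis
  proof (rule that)
    fix k l assume kl: "k \<in> I" "l \<in> I"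
    show "polar g (indicator {k}) (indicator {l}) = (if k = l
        then polar g (indicator {i0}) (indicator {i0}) else polar g (indicator {i0}) (indicator {j0}))"
      using polar_indicator_diag_eq[where g = g, OF perm kl(2) ij(1)]
        polar_indicator_offdiag_eq[where g = g, OF perm kl _ ij] by simp
  qed
qed

lemma invariant_plane_quadratic_eq_sum_sq_dev:
  fixes g :: "('i \<Rightarrow> real) \<Rightarrow> real"
  assumes fin: "finite I" and card: "card I \<ge> 2" and quad: "plane_quadratic g"
    and perm: "\<And>\<sigma> y. \<sigma> permutes I \<Longrightarrow> g (y \<circ> \<sigma>) = g y"
    and shift: "\<And>y s. g (\<lambda>i. y i + s) = g y"
    and local: "\<And>y z. (\<And>i. i \<in> I \<Longrightarrow> y i = z i) \<Longrightarrow> g y = g z"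
    and nonneg: "\<And>y. 0 \<le> g y"
  shows "\<exists>c\<ge>0. \<forall>y. g y = c * sum_sq_dev I y"
proof -
  obtain \<alpha> \<beta> where polar_indicator:
    "\<And>k l. k \<in> I \<Longrightarrow> l \<in> I \<Longrightarrow> polar g (indicator {k}) (indicator {l}) = (if k = l then \<alpha> else \<beta>)"
    using polar_indicator_eq_if[where g = g, OF fin card perm] by blast
  have eq: "g y = (\<alpha> - \<beta>) * sum_sq_dev I y" for y
  proof -
    define w where "w i = y i - (\<Sum>j\<in>I. y j) / card I" for i
    have sum_w: "(\<Sum>i\<in>I. w i) = 0"
      using card unfolding w_def by (simp add: sum_subtractf)
    have "g y = g w"
      unfolding w_def using shift[of y "- (\<Sum>j\<in>I. y j) / card I"] by simp
    also have "\<dots> = g (\<lambda>i. \<Sum>k\<in>I. w k * indicator {k} i)"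
      by (rule local) (simp add: fin indicator_def if_distrib sum.delta cong: if_cong)
    also have "\<dots> = (\<Sum>k\<in>I. \<Sum>l\<in>I. w k * w l * (if k = l then \<alpha> else \<beta>))"
      unfolding plane_quadratic_expansion[OF quad fin] by (intro sum.cong) (simp_all add: polar_indicator)
    also have "\<dots> = (\<alpha> - \<beta>) * (\<Sum>i\<in>I. (w i)\<^sup>2)"
      by (simp add: double_sum_diag_offdiag[OF fin] sum_w)
    also have "\<dots> = (\<alpha> - \<beta>) * sum_sq_dev I y"
      by (simp add: sum_sq_dev_def w_def)
    finally show ?thesis .
  qed
  obtain k where "k \<in> I"
    using card by fastforce
  then have "0 \<le> \<alpha> - \<beta>"
    using nonneg[of "indicator {k}"] sum_sq_dev_indicator_pos[OF fin card \<open>k \<in> I\<close>]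
    unfolding eq by (simp add: zero_le_mult_iff)
  with eq show ?thesis by blast
qed

section \<open>Matrices\<close>

definition outer_prod :: "real^'m \<Rightarrow> real^'n \<Rightarrow> real^'n^'m" where
  "outer_prod x y = (\<chi> i j. x $ i * y $ j)"

lemma outer_prod_mult_vec: "outer_prod x y *v z = (y \<bullet> z) *\<^sub>R x"
  by (simp add: outer_prod_def matrix_vector_mult_def inner_vec_def vec_eq_iff sum_distrib_left mult_ac)

lemma vec_mult_outer_prod: "w v* outer_prod x y = (w \<bullet> x) *\<^sub>R y"
  by (simp add: outer_prod_def vector_matrix_mult_def inner_vec_def vec_eq_iff sum_distrib_left mult_ac)

lemma quadratic_form_congruence:
  fixes A :: "real^'m^'n" and M :: "real^'m^'m"
  shows "e \<bullet> ((A ** M ** transpose A) *v e) = (e v* A) \<bullet> (M *v (e v* A))"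
proof -
  have "(A ** M ** transpose A) *v e = A *v (M *v (transpose A *v e))"
    by (simp only: matrix_vector_mul_assoc matrix_mul_assoc)
  then show ?thesis
    by (simp only: dot_lmul_matrix[symmetric] transpose_matrix_vector)
qed

lemma quadratic_form_mult_transpose:
  fixes C :: "real^'n^'m"
  shows "a \<bullet> ((C ** transpose C) *v a) = (\<Sum>j\<in>UNIV. (a \<bullet> column j C)\<^sup>2)"
proof -
  have "a \<bullet> ((C ** transpose C) *v a) = (a v* C) \<bullet> (a v* C)"
    using quadratic_form_congruence[of a C "mat 1"] by simp
  also have "\<dots> = (\<Sum>j\<in>UNIV. (a \<bullet> column j C)\<^sup>2)"
    by (simp add: inner_vec_def vector_matrix_mult_def column_def power2_eq_square mult_ac)
  finally show ?thesis .
qed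

lemma symmetric_matrix_eqI:
  fixes A B :: "real^'n^'n"
  assumes "transpose A = A" "transpose B = B" and "\<And>x. x \<bullet> (A *v x) = x \<bullet> (B *v x)"
  shows "A = B"
proof -
  have symmetric: "x \<bullet> (M *v y) = y \<bullet> (M *v x)" if "transpose M = M" for M :: "real^'n^'n" and x y
    by (metis dot_lmul_matrix inner_commute that vector_transpose_matrix)
  have "x \<bullet> (A *v y) = x \<bullet> (B *v y)" for x y
    using assms(3)[of "x + y"] assms(3)[of x] assms(3)[of y] symmetric[OF assms(1), of x y]
      symmetric[OF assms(2), of x y]
    by (simp add: matrix_vector_right_distrib inner_add_left inner_add_right)
  then have "A *v y = B *v y" for y
    by (metis inner_commute vector_eq_rdot)
  then show ?thesis
    by (rule matrix_eq[THEN iffD2, rule_format])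
qed

lemma axis_quadratic_form: "axis k 1 \<bullet> (M *v axis k 1) = (M :: real^'n^'n) $ k $ k"
  by (simp add: matrix_vector_mult_basis column_def inner_axis')

lemma invertible_iff_ker: "invertible (A :: real^'n^'n) \<longleftrightarrow> (\<forall>x. A *v x = 0 \<longrightarrow> x = 0)"
  using invertible_left_inverse matrix_left_invertible_ker by blast

lemma invertible_scaled_identity_plus_outer_prod:
  fixes e a :: "real^'n"
  assumes "t \<noteq> 0" "t + a \<bullet> e \<noteq> 0"
  shows "invertible (t *\<^sub>R mat 1 + outer_prod e a)"
  unfolding invertible_iff_ker
proof (intro allI impI)
  fix x assume x: "(t *\<^sub>R mat 1 + outer_prod e a) *v x = 0"
  then have x': "t *\<^sub>R x + (a \<bullet> x) *\<^sub>R e = 0"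
    by (simp add: matrix_vector_mult_add_rdistrib outer_prod_mult_vec scaleR_matrix_vector_assoc[symmetric])
  then have "a \<bullet> (t *\<^sub>R x + (a \<bullet> x) *\<^sub>R e) = 0"
    by simp
  then have "(a \<bullet> x) * (t + a \<bullet> e) = 0"
    by (simp add: inner_add_right algebra_simps)
  with x' assms show "x = 0"
    by simp
qed

section \<open>Empirical measures\<close>

lemma affine_image_empirical:
  "affine_image A v (empirical I Y) = empirical I (\<lambda>i. A *v Y i + v)"
  unfolding affine_image_def empirical_def
  by (subst distr_distr) (auto simp: comp_def intro!: borel_measurable_continuous_onI continuous_intros)

lemma empirical_cong:
  assumes "finite I" "I \<noteq> {}" "\<And>i. i \<in> I \<Longrightarrow> X i = Y i"
  shows "empirical I X = empirical I Y"
  unfolding empirical_def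
  by (rule distr_cong_AE) (use assms in \<open>auto simp: AE_measure_pmf_iff\<close>)

lemma empirical_permute:
  assumes "finite I" "\<sigma> permutes I"
  shows "empirical I (X \<circ> \<sigma>) = empirical I X"
proof -
  have "empirical I (X \<circ> \<sigma>) = distr (measure_pmf (map_pmf \<sigma> (pmf_of_set I))) borel X"
    unfolding empirical_def map_pmf_rep_eq by (subst distr_distr) auto
  also have "map_pmf \<sigma> (pmf_of_set I) = pmf_of_set I"
    using assms by (cases "I = {}") (simp_all add: map_pmf_of_set_inj permutes_inj_on permutes_image)
  finally show ?thesis unfolding empirical_def .
qed

lemma integral_empirical:
  assumes "finite I" "I \<noteq> {}" "continuous_on UNIV f"
  shows "integral\<^sup>L (empirical I Y) (f :: real^'d \<Rightarrow> real) = (\<Sum>i\<in>I. f (Y i)) / card I"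
  unfolding empirical_def using assms
  by (subst integral_distr) (auto intro: borel_measurable_continuous_onI simp: integral_pmf_of_set)

lemma pmf_of_set_Times:
  assumes "finite A" "A \<noteq> {}" "finite B" "B \<noteq> {}"
  shows "pmf_of_set (A \<times> B) = pair_pmf (pmf_of_set A) (pmf_of_set B)"
  by (rule pmf_eqI) (auto simp: assms pmf_pair card_cartesian_product indicator_def)

lemma div_mod_image_lessThan:
  fixes m n :: nat
  assumes "0 < n"
  shows "(\<lambda>j. (j div n, j mod n)) ` {..<m * n} = {..<m} \<times> {..<n}"
proof
  show "(\<lambda>j. (j div n, j mod n)) ` {..<m * n} \<subseteq> {..<m} \<times> {..<n}"
    using assms by (auto intro: less_mult_imp_div_less)
  show "{..<m} \<times> {..<n} \<subseteq> (\<lambda>j. (j div n, j mod n)) ` {..<m * n}"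
  proof clarify
    fix q r assume "q < m" "r < n"
    have "q * n + r < Suc q * n"
      using \<open>r < n\<close> by simp
    also have "\<dots> \<le> m * n"
      using \<open>q < m\<close> by (intro mult_le_mono1) simp
    finally have "q * n + r < m * n" .
    with \<open>r < n\<close> show "(q, r) \<in> (\<lambda>j. (j div n, j mod n)) ` {..<m * n}"
      by (intro image_eqI[of _ _ "q * n + r"]) auto
  qed
qed

lemma empirical_replicate:
  fixes m n :: nat
  assumes "0 < m" "0 < n"
  shows "empirical {..<m * n} (\<lambda>j. X (j mod n)) = empirical {..<n} X"
proof -
  have inj: "inj_on (\<lambda>j. (j div n, j mod n)) {..<m * n}"
  proof (rule inj_onI)
    fix i j assume "(i div n, i mod n) = (j div n, j mod n)"
    then have "i div n = j div n" "i mod n = j mod n"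
      by simp_all
    then show "i = j"
      by (metis div_mult_mod_eq)
  qed
  have "{..<m * n} \<noteq> {}"
    using assms by (simp add: lessThan_empty_iff)
  have "map_pmf (\<lambda>j. j mod n) (pmf_of_set {..<m * n})
      = map_pmf snd (map_pmf (\<lambda>j. (j div n, j mod n)) (pmf_of_set {..<m * n}))"
    by (simp add: pmf.map_comp comp_def)
  also have "map_pmf (\<lambda>j. (j div n, j mod n)) (pmf_of_set {..<m * n}) = pmf_of_set ({..<m} \<times> {..<n})"
    using map_pmf_of_set_inj[OF inj \<open>{..<m * n} \<noteq> {}\<close>] div_mod_image_lessThan[OF assms(2)] by simp
  also have "map_pmf snd (pmf_of_set ({..<m} \<times> {..<n})) = pmf_of_set {..<n}"
    using assms by (simp add: pmf_of_set_Times map_snd_pair_pmf lessThan_empty_iff)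
  finally have mod: "map_pmf (\<lambda>j. j mod n) (pmf_of_set {..<m * n}) = pmf_of_set {..<n}" .
  have "empirical {..<m * n} (\<lambda>j. X (j mod n))
      = distr (measure_pmf (map_pmf (\<lambda>j. j mod n) (pmf_of_set {..<m * n}))) borel X"
    unfolding empirical_def map_pmf_rep_eq by (subst distr_distr) (auto simp: comp_def)
  then show ?thesis
    unfolding mod empirical_def .
qed

lemma weak_conv_empirical_pointwise:
  fixes Y :: "nat \<Rightarrow> 'i \<Rightarrow> real^'d"
  assumes "finite I" "I \<noteq> {}" and lim: "\<And>i. i \<in> I \<Longrightarrow> (\<lambda>k. Y k i) \<longlonglongrightarrow> Z i"
  shows "weak_conv (\<lambda>k. empirical I (Y k)) (empirical I Z)"
  unfolding weak_conv_def
proof (intro allI impI)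
  fix f :: "real^'d \<Rightarrow> real" assume f: "continuous_on UNIV f \<and> bounded (range f)"
  then have "isCont f y" for y
    by (simp add: continuous_on_eq_continuous_at)
  then have terms: "(\<lambda>k. f (Y k i)) \<longlonglongrightarrow> f (Z i)" if "i \<in> I" for i
    using isCont_tendsto_compose lim[OF that] by blast
  have "(\<lambda>k. (\<Sum>i\<in>I. f (Y k i)) / card I) \<longlonglongrightarrow> (\<Sum>i\<in>I. f (Z i)) / card I"
    using assms(1,2) by (auto intro!: tendsto_divide tendsto_sum terms)
  then show "(\<lambda>k. integral\<^sup>L (empirical I (Y k)) f) \<longlonglongrightarrow> integral\<^sup>L (empirical I Z) f"
    using f assms(1,2) by (subst (1 2) integral_empirical) auto
qed

lemma weak_conv_empirical_outlier:
  fixes p :: "nat \<Rightarrow> real^'d"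
  shows "weak_conv (\<lambda>k. empirical {..<k + 2} (\<lambda>i. if i = 0 then p k else x)) (empirical {..<1::nat} (\<lambda>i. x))"
  unfolding weak_conv_def
proof (intro allI impI)
  fix f :: "real^'d \<Rightarrow> real" assume f: "continuous_on UNIV f \<and> bounded (range f)"
  then obtain B where B: "\<And>y. norm (f y) \<le> B"
    unfolding bounded_iff by auto
  have "integral\<^sup>L (empirical {..<k + 2} (\<lambda>i. if i = 0 then p k else x)) f
      = f x + (f (p k) - f x) / real (k + 2)" for k
  proof -
    have "integral\<^sup>L (empirical {..<k + 2} (\<lambda>i. if i = 0 then p k else x)) f
        = (\<Sum>i<k + 2. f (if i = 0 then p k else x)) / real (k + 2)"
      using f[THEN conjunct1] by (subst integral_empirical) auto
    also have "(\<Sum>i<k + 2. f (if i = 0 then p k else x)) = f (p k) + real (k + 1) * f x"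
      by (simp only: add_2_eq_Suc' sum.lessThan_Suc_shift) (simp add: algebra_simps)
    finally show ?thesis
      by (simp add: field_simps)
  qed
  moreover have "integral\<^sup>L (empirical {..<1::nat} (\<lambda>i. x)) f = f x"
    using f[THEN conjunct1] by (subst integral_empirical) auto
  moreover have "(\<lambda>k. (f (p k) - f x) * (1 / real (k + 2))) \<longlonglongrightarrow> 0"
  proof (rule lim_null_mult_left_bounded)
    show "\<forall>\<^sub>F k in sequentially. norm (f (p k) - f x) \<le> 2 * B"
      using B by (intro always_eventually allI) (smt (verit) norm_triangle_ineq4)
    show "(\<lambda>k. 1 / real (k + 2)) \<longlonglongrightarrow> 0"
      using LIMSEQ_ignore_initial_segment[OF lim_inverse_n', of 2] by simp
  qed
  ultimately show "(\<lambda>k. integral\<^sup>L (empirical {..<k + 2} (\<lambda>i. if i = 0 then p k else x)) f)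
      \<longlonglongrightarrow> integral\<^sup>L (empirical {..<1::nat} (\<lambda>i. x)) f"
    using tendsto_add[OF tendsto_const, of _ 0 sequentially "f x"] by simp
qed

section \<open>Scatter functionals on empirical measures\<close>

lemma plane_quadratic_projected_scatter:
  fixes S :: "(real^'d) measure \<Rightarrow> real^'d^'d" and I :: "'i set"
  assumes "k' \<noteq> k"
    and project: "\<And>Y a. a \<bullet> (S (empirical I Y) *v a) =
      axis k 1 \<bullet> (S (empirical I (\<lambda>i. (a \<bullet> Y i) *\<^sub>R axis k 1)) *v axis k 1)"
  shows "plane_quadratic (\<lambda>y. axis k 1 \<bullet> (S (empirical I (\<lambda>i. y i *\<^sub>R axis k 1)) *v axis k 1))"
  unfolding plane_quadratic_def
proof (intro allI)
  fix u v :: "'i \<Rightarrow> real"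
  define e where "e = (axis k 1 :: real^'d)"
  define e' where "e' = (axis k' 1 :: real^'d)"
  have basis: "e \<bullet> e = 1" "e \<bullet> e' = 0" "e' \<bullet> e = 0" "e' \<bullet> e' = 1"
    using \<open>k' \<noteq> k\<close> by (auto simp: e_def e'_def inner_axis_axis)
  define N where "N = S (empirical I (\<lambda>i. u i *\<^sub>R e + v i *\<^sub>R e'))"
  have "e \<bullet> (S (empirical I (\<lambda>i. (\<alpha> * u i + \<beta> * v i) *\<^sub>R e)) *v e)
      = (\<alpha> *\<^sub>R e + \<beta> *\<^sub>R e') \<bullet> (N *v (\<alpha> *\<^sub>R e + \<beta> *\<^sub>R e'))" for \<alpha> \<beta>
    unfolding N_def project[of "\<alpha> *\<^sub>R e + \<beta> *\<^sub>R e'"] e_def[symmetric]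
    by (simp add: inner_add_left inner_add_right basis mult.commute)
  also have "\<dots> \<alpha> \<beta> = (e \<bullet> (N *v e)) * \<alpha>\<^sup>2 + (e \<bullet> (N *v e') + e' \<bullet> (N *v e)) * \<alpha> * \<beta>
      + (e' \<bullet> (N *v e')) * \<beta>\<^sup>2" for \<alpha> \<beta>
    by (simp add: matrix_vector_right_distrib inner_add_left inner_add_right matrix_vector_mult_scaleR
        algebra_simps power2_eq_square)
  finally show "\<exists>p q r. \<forall>\<alpha> \<beta>.
      axis k 1 \<bullet> (S (empirical I (\<lambda>i. (\<alpha> * u i + \<beta> * v i) *\<^sub>R axis k 1)) *v axis k 1)
      = p * \<alpha>\<^sup>2 + q * \<alpha> * \<beta> + r * \<beta>\<^sup>2"
    unfolding e_def by blast
qed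

lemma scatter_quadratic_form_eq_sum_sq_dev:
  fixes S :: "(real^'d) measure \<Rightarrow> real^'d^'d" and I :: "'i set"
  assumes fin: "finite I" and card: "card I \<ge> 2" and dim: "CARD('d) \<ge> 2"
    and psd: "\<And>Y a. 0 \<le> a \<bullet> (S (empirical I Y) *v a)"
    and shift: "\<And>Y v. S (empirical I (\<lambda>i. Y i + v)) = S (empirical I Y)"
    and project: "\<And>Y a k. a \<bullet> (S (empirical I Y) *v a) =
      axis k 1 \<bullet> (S (empirical I (\<lambda>i. (a \<bullet> Y i) *\<^sub>R axis k 1)) *v axis k 1)"
  shows "\<exists>c\<ge>0. \<forall>Y a. a \<bullet> (S (empirical I Y) *v a) = c * sum_sq_dev I (\<lambda>i. a \<bullet> Y i)"
proof -
  obtain k k' :: 'd where "k' \<noteq> k"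
    using dim card_le_Suc0_iff_eq[of "UNIV :: 'd set"] by force
  define e where "e = (axis k 1 :: real^'d)"
  define g where "g y = e \<bullet> (S (empirical I (\<lambda>i. y i *\<^sub>R e)) *v e)" for y
  have "plane_quadratic g"
    unfolding g_def e_def using \<open>k' \<noteq> k\<close> project by (rule plane_quadratic_projected_scatter)
  moreover have "g (y \<circ> \<sigma>) = g y" if "\<sigma> permutes I" for \<sigma> y
    using empirical_permute[OF fin that, of "\<lambda>i. y i *\<^sub>R e"] by (simp add: g_def comp_def)
  moreover have "g (\<lambda>i. y i + s) = g y" for y s
    using shift[of "\<lambda>i. y i *\<^sub>R e" "s *\<^sub>R e"] by (simp add: g_def scaleR_add_left)
  moreover have "g y = g z" if "\<And>i. i \<in> I \<Longrightarrow> y i = z i" for y z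
  proof -
    have "I \<noteq> {}"
      using card by auto
    with that show ?thesis
      unfolding g_def by (metis (no_types, lifting) empirical_cong[OF fin])
  qed
  moreover have "0 \<le> g y" for y
    unfolding g_def by (rule psd)
  ultimately obtain c where "c \<ge> 0" and c: "\<And>y. g y = c * sum_sq_dev I y"
    using invariant_plane_quadratic_eq_sum_sq_dev[OF fin card, of g] by blast
  moreover have "a \<bullet> (S (empirical I Y) *v a) = c * sum_sq_dev I (\<lambda>i. a \<bullet> Y i)" for Y a
    using c[of "\<lambda>i. a \<bullet> Y i"] by (simp add: g_def e_def project[of a Y k])
  ultimately show ?thesis by blast
qed

lemma empirical_in_range_data_emp:
  fixes Y :: "'n::finite \<Rightarrow> real^'d"
  shows "empirical UNIV Y \<in> range (data_emp :: real^'n^'d \<Rightarrow> _)"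
proof -
  have "empirical UNIV Y = data_emp (\<chi> i j. Y j $ i)"
    unfolding data_emp_def by (simp add: column_def)
  then show ?thesis by simp
qed

lemma sum_column_centered:
  fixes X :: "real^'n::finite^'d"
  shows "(\<Sum>j\<in>UNIV. column j (centered X)) = 0"
proof -
  have "column j (centered X) = column j X - col_mean X" for j
    by (simp add: centered_def column_def vec_eq_iff)
  then have "(\<Sum>j\<in>UNIV. column j (centered X)) = (\<Sum>j\<in>UNIV. column j X) - real CARD('n) *\<^sub>R col_mean X"
    by (simp only: sum_subtractf sum_constant_scaleR)
  also have "real CARD('n) *\<^sub>R col_mean X = (\<Sum>j\<in>UNIV. column j X)"
    by (simp add: col_mean_def)
  finally show ?thesis
    by simp
qed

lemma sum_sq_dev_eq_sum_sq:
  assumes "(\<Sum>i\<in>I. y i) = 0"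
  shows "sum_sq_dev I y = (\<Sum>i\<in>I. (y i)\<^sup>2)"
  using assms by (simp add: sum_sq_dev_def)

lemma sum_sq_dev_centered_columns:
  fixes X :: "real^'n::finite^'d"
  shows "sum_sq_dev UNIV (\<lambda>j. a \<bullet> column j (centered X)) =
    a \<bullet> ((centered X ** transpose (centered X)) *v a)"
proof -
  have "(\<Sum>j\<in>UNIV. a \<bullet> column j (centered X)) = 0"
    using sum_column_centered[of X] by (simp add: inner_sum_right[symmetric])
  then show ?thesis
    unfolding quadratic_form_mult_transpose by (rule sum_sq_dev_eq_sum_sq)
qed

lemma singularly_equivariant_scatter_empirical:
  fixes S :: "(real^'d) measure \<Rightarrow> real^'d^'d" and Y :: "'n::finite \<Rightarrow> real^'d"
  assumes "singularly_affinely_equivariant (range (data_emp :: real^'n^'d \<Rightarrow> _)) S"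
  shows "S (empirical UNIV (\<lambda>j. A *v Y j + v)) = A ** S (empirical UNIV Y) ** transpose A"
    and "nnd_matrix (S (empirical UNIV Y))"
proof -
  have "S (affine_image A v (empirical UNIV Y)) = A ** S (empirical UNIV Y) ** transpose A"
    using assms empirical_in_range_data_emp[of Y] unfolding singularly_affinely_equivariant_def by blast
  then show "S (empirical UNIV (\<lambda>j. A *v Y j + v)) = A ** S (empirical UNIV Y) ** transpose A"
    by (simp only: affine_image_empirical)
  show "nnd_matrix (S (empirical UNIV Y))"
    using assms empirical_in_range_data_emp[of Y]
    unfolding singularly_affinely_equivariant_def scatter_functional_def by blast
qed

lemma singularly_equivariant_scatter_centered:
  fixes S :: "(real^'d) measure \<Rightarrow> real^'d^'d"
  assumes dim: "CARD('d) \<ge> 2" and n: "CARD('n::finite) \<ge> 2"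
    and S: "singularly_affinely_equivariant (range (data_emp :: real^'n^'d \<Rightarrow> _)) S"
  shows "\<exists>c\<ge>0. \<forall>X :: real^'n^'d.
    S (data_emp (centered X)) = c *\<^sub>R (centered X ** transpose (centered X))"
proof -
  note equivariant = singularly_equivariant_scatter_empirical(1)[OF S]
    and nnd = singularly_equivariant_scatter_empirical(2)[OF S]
  have "\<exists>c\<ge>0. \<forall>Y a. a \<bullet> (S (empirical (UNIV :: 'n set) Y) *v a) = c * sum_sq_dev UNIV (\<lambda>j. a \<bullet> Y j)"
  proof (rule scatter_quadratic_form_eq_sum_sq_dev)
    fix Y :: "'n \<Rightarrow> real^'d" and a :: "real^'d" and k :: 'd
    have projected: "S (empirical UNIV (\<lambda>j. (a \<bullet> Y j) *\<^sub>R axis k 1))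
        = outer_prod (axis k 1) a ** S (empirical UNIV Y) ** transpose (outer_prod (axis k 1) a)"
      using equivariant[of "outer_prod (axis k 1) a" Y 0] by (simp add: outer_prod_mult_vec)
    show "a \<bullet> (S (empirical UNIV Y) *v a) =
        axis k 1 \<bullet> (S (empirical UNIV (\<lambda>j. (a \<bullet> Y j) *\<^sub>R axis k 1)) *v axis k 1)"
      unfolding projected by (simp add: quadratic_form_congruence vec_mult_outer_prod inner_axis_axis)
  next
    show "S (empirical UNIV (\<lambda>j. Y j + v)) = S (empirical UNIV Y)" for Y :: "'n \<Rightarrow> real^'d" and v
      using equivariant[of "mat 1" Y v] by simp
  qed (use dim n nnd nnd_matrix_def in auto)
  then obtain c where "c \<ge> 0"
    and c: "\<And>Y a. a \<bullet> (S (empirical (UNIV :: 'n set) Y) *v a) = c * sum_sq_dev UNIV (\<lambda>j. a \<bullet> Y j)"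
    by blast
  have "S (data_emp (centered X)) = c *\<^sub>R (centered X ** transpose (centered X))" for X :: "real^'n^'d"
  proof (rule symmetric_matrix_eqI)
    show "transpose (S (data_emp (centered X))) = S (data_emp (centered X))"
      using nnd unfolding data_emp_def nnd_matrix_def by blast
    show "transpose (c *\<^sub>R (centered X ** transpose (centered X)))
        = c *\<^sub>R (centered X ** transpose (centered X))"
      by (simp add: transpose_scalar matrix_transpose_mul)
    show "a \<bullet> (S (data_emp (centered X)) *v a)
        = a \<bullet> ((c *\<^sub>R (centered X ** transpose (centered X))) *v a)" for a
      unfolding data_emp_def c sum_sq_dev_centered_columns scaleR_matrix_vector_assoc[symmetric] by simp
  qed
  with \<open>c \<ge> 0\<close> show ?thesis by blast
qed

section \<open>Weakly continuous scatter functionals\<close>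

lemma invertible_approx_outer_prod:
  fixes e a :: "real^'n"
  obtains t :: "nat \<Rightarrow> real" where "t \<longlonglongrightarrow> 0" and "\<And>j. invertible (t j *\<^sub>R mat 1 + outer_prod e a)"
proof -
  \<comment> \<open>the sign of t j keeps t j + a \<bullet> e away from 0\<close>
  define \<sigma> where "\<sigma> = (if a \<bullet> e < 0 then -1 else 1 :: real)"
  define t where "t j = \<sigma> / real (Suc j)" for j
  have "t \<longlonglongrightarrow> 0"
    unfolding t_def using LIMSEQ_Suc[OF lim_const_over_n[of \<sigma>]] by simp
  moreover have "t j \<noteq> 0" "t j + a \<bullet> e \<noteq> 0" for j
  proof -
    have "0 < 1 / real (Suc j)"
      by simp
    moreover have "t j = (if a \<bullet> e < 0 then - (1 / real (Suc j)) else 1 / real (Suc j))"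
      by (simp add: t_def \<sigma>_def)
    ultimately show "t j \<noteq> 0" "t j + a \<bullet> e \<noteq> 0"
      by (smt (verit))+
  qed
  ultimately show ?thesis
    using that invertible_scaled_identity_plus_outer_prod by blast
qed

lemma empirical_in_all_empirical:
  fixes N :: nat
  assumes "0 < N"
  shows "empirical {..<N} Y \<in> all_empirical"
proof -
  have "1 \<le> N"
    using assms by simp
  then show ?thesis
    unfolding all_empirical_def by blast
qed

lemma scatter_empirical_outlier:
  fixes S :: "(real^'d) measure \<Rightarrow> real^'d^'d" and N :: nat
  assumes c: "\<And>Y a. a \<bullet> (S (empirical {..<N} Y) *v a) = c * sum_sq_dev {..<N} (\<lambda>i. a \<bullet> Y i)"
  shows "axis k 1 \<bullet> (S (empirical {..<N} (\<lambda>i. if i = 0 then r *\<^sub>R axis k 1 else 0)) *v axis k 1)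
    = c * (r\<^sup>2 * sum_sq_dev {..<N} (indicator {0}))"
proof -
  have "(\<lambda>i::nat. axis k 1 \<bullet> (if i = 0 then r *\<^sub>R axis k 1 else 0 :: real^'d))
      = (\<lambda>i. r * indicator {0} i)"
    by (rule ext) (simp add: inner_axis_axis indicator_def)
  then show ?thesis
    using c[where Y = "\<lambda>i. if i = 0 then r *\<^sub>R axis k 1 else 0" and a = "axis k 1"]
    by (simp only: sum_sq_dev_scale)
qed

context
  fixes S :: "(real^'d) measure \<Rightarrow> real^'d^'d"
  assumes equivariant: "affinely_equivariant all_empirical S"
    and continuous: "weakly_continuous_on all_empirical S"
begin

lemma scatter_empirical_affine:
  fixes N :: nat
  assumes "0 < N" "invertible A"
  shows "S (empirical {..<N} (\<lambda>i. A *v Y i + v)) = A ** S (empirical {..<N} Y) ** transpose A"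
proof -
  have "\<forall>Q\<in>all_empirical. \<forall>A v. invertible A \<longrightarrow>
      affine_image A v Q \<in> all_empirical \<and> S (affine_image A v Q) = A ** S Q ** transpose A"
    using equivariant unfolding affinely_equivariant_def by (rule conjunct2)
  then have "S (affine_image A v (empirical {..<N} Y)) = A ** S (empirical {..<N} Y) ** transpose A"
    using empirical_in_all_empirical[OF assms(1)] assms(2) by blast
  then show ?thesis
    by (simp only: affine_image_empirical)
qed

lemma scatter_empirical_nnd:
  fixes N :: nat
  assumes "0 < N"
  shows "nnd_matrix (S (empirical {..<N} Y))"
proof -
  have "scatter_functional all_empirical S"
    using equivariant unfolding affinely_equivariant_def by (rule conjunct1)
  then show ?thesis
    using empirical_in_all_empirical[OF assms] unfolding scatter_functional_def by blast
qed

lemma scatter_empirical_tendsto: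
  fixes Ns :: "nat \<Rightarrow> nat" and N :: nat
  assumes "\<And>k. 0 < Ns k" "0 < N" "weak_conv (\<lambda>k. empirical {..<Ns k} (Ys k)) (empirical {..<N} Y)"
  shows "(\<lambda>k. S (empirical {..<Ns k} (Ys k))) \<longlonglongrightarrow> S (empirical {..<N} Y)"
  by (rule continuous[unfolded weakly_continuous_on_def, rule_format])
    (simp add: assms empirical_in_all_empirical)

lemma scatter_empirical_zero:
  fixes N :: nat
  assumes "0 < N"
  shows "S (empirical {..<N} (\<lambda>i. 0)) = 0"
proof -
  let ?S0 = "S (empirical {..<N} (\<lambda>i. 0))"
  have "invertible (2 *\<^sub>R mat 1 :: real^'d^'d)"
    by (simp add: invertible_iff_ker scaleR_matrix_vector_assoc[symmetric])
  then have "?S0 = (2 *\<^sub>R mat 1) ** ?S0 ** transpose (2 *\<^sub>R mat 1)"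
    using scatter_empirical_affine[OF assms, of "2 *\<^sub>R mat 1" "\<lambda>i. 0" 0] by simp
  also have "\<dots> = 4 *\<^sub>R ?S0"
    by (simp add: transpose_scalar matrix_scalar_ac scalar_matrix_assoc[symmetric])
  finally have "1 *\<^sub>R ?S0 = 4 *\<^sub>R ?S0"
    by (simp only: scaleR_one)
  then show ?thesis
    by (simp only: scaleR_cancel_right) simp
qed

lemma scatter_empirical_projection:
  fixes N :: nat
  assumes "0 < N"
  shows "a \<bullet> (S (empirical {..<N} Y) *v a) =
    axis k 1 \<bullet> (S (empirical {..<N} (\<lambda>i. (a \<bullet> Y i) *\<^sub>R axis k 1)) *v axis k 1)"
proof -
  define e where "e = (axis k 1 :: real^'d)"
  define M where "M = S (empirical {..<N} Y)"
  obtain t where "t \<longlonglongrightarrow> 0" and invertible: "\<And>j. invertible (t j *\<^sub>R mat 1 + outer_prod e a)"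
    using invertible_approx_outer_prod[of e a] by blast
  define A where "A j = t j *\<^sub>R mat 1 + outer_prod e a" for j
  have A_mult: "A j *v y = t j *\<^sub>R y + (a \<bullet> y) *\<^sub>R e" for j y
    by (simp add: A_def matrix_vector_mult_add_rdistrib outer_prod_mult_vec
        scaleR_matrix_vector_assoc[symmetric])
  have mult_A: "e v* A j = t j *\<^sub>R e + a" for j
    by (simp add: A_def vector_matrix_mult_add_rdistrib vector_scaleR_matrix_ac vec_mult_outer_prod
        e_def inner_axis_axis)
  have image: "e \<bullet> (S (empirical {..<N} (\<lambda>i. A j *v Y i)) *v e)
      = (t j *\<^sub>R e + a) \<bullet> (M *v (t j *\<^sub>R e + a))" for j
    using scatter_empirical_affine[OF assms, of "A j" Y 0] invertible[of j]
    by (simp add: A_def[symmetric] M_def quadratic_form_congruence mult_A)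
  have "weak_conv (\<lambda>j. empirical {..<N} (\<lambda>i. A j *v Y i)) (empirical {..<N} (\<lambda>i. (a \<bullet> Y i) *\<^sub>R e))"
    unfolding A_mult using assms \<open>t \<longlonglongrightarrow> 0\<close>
    by (intro weak_conv_empirical_pointwise) (auto intro!: tendsto_eq_intros)
  then have "(\<lambda>j. e \<bullet> (S (empirical {..<N} (\<lambda>i. A j *v Y i)) *v e))
      \<longlonglongrightarrow> e \<bullet> (S (empirical {..<N} (\<lambda>i. (a \<bullet> Y i) *\<^sub>R e)) *v e)"
    unfolding e_def axis_quadratic_form using assms
    by (intro tendsto_vec_nth scatter_empirical_tendsto) auto
  moreover have "(\<lambda>j. e \<bullet> (S (empirical {..<N} (\<lambda>i. A j *v Y i)) *v e)) \<longlonglongrightarrow> a \<bullet> (M *v a)"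
  proof -
    have "(\<lambda>j. t j *\<^sub>R e + a) \<longlonglongrightarrow> a"
      using tendsto_add[OF tendsto_scaleR[OF \<open>t \<longlonglongrightarrow> 0\<close> tendsto_const] tendsto_const] by simp
    then show ?thesis
      unfolding image by (intro tendsto_inner isCont_tendsto_compose[OF matrix_vector_mult_linear_continuous_at])
  qed
  ultimately show ?thesis
    unfolding M_def e_def by (rule LIMSEQ_unique[symmetric])
qed

lemma scatter_empirical_sum_sq_dev:
  fixes N :: nat
  assumes "CARD('d) \<ge> 2" "2 \<le> N"
  shows "\<exists>c\<ge>0. \<forall>Y a. a \<bullet> (S (empirical {..<N} Y) *v a) = c * sum_sq_dev {..<N} (\<lambda>i. a \<bullet> Y i)"
proof (rule scatter_quadratic_form_eq_sum_sq_dev)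
  have "0 < N"
    using assms(2) by simp
  then show "0 \<le> a \<bullet> (S (empirical {..<N} Y) *v a)" for Y a
    using scatter_empirical_nnd unfolding nnd_matrix_def by blast
  have "invertible (mat 1 :: real^'d^'d)"
    by (simp add: invertible_iff_ker)
  then show "S (empirical {..<N} (\<lambda>i. Y i + v)) = S (empirical {..<N} Y)" for Y v
    using scatter_empirical_affine[OF \<open>0 < N\<close>, of "mat 1" Y v] by simp
  show "a \<bullet> (S (empirical {..<N} Y) *v a) =
      axis k 1 \<bullet> (S (empirical {..<N} (\<lambda>i. (a \<bullet> Y i) *\<^sub>R axis k 1)) *v axis k 1)" for Y a k
    by (rule scatter_empirical_projection[OF \<open>0 < N\<close>])
qed (use assms in auto)

lemma scatter_empirical_outlier_tendsto_zero:
  "(\<lambda>j. S (empirical {..<j + 2} (\<lambda>i. if i = 0 then p j else 0))) \<longlonglongrightarrow> 0"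
proof -
  have "(\<lambda>j. S (empirical {..<j + 2} (\<lambda>i. if i = 0 then p j else 0)))
      \<longlonglongrightarrow> S (empirical {..<1::nat} (\<lambda>i. 0))"
    by (rule scatter_empirical_tendsto[OF _ _ weak_conv_empirical_outlier]) auto
  then show ?thesis
    using scatter_empirical_zero[of 1] by simp
qed

lemma scatter_empirical_eq_zero:
  fixes N :: nat
  assumes "0 < N" and quadratic_form: "\<And>a. a \<bullet> (S (empirical {..<N} Y) *v a) = 0"
  shows "S (empirical {..<N} Y) = 0"
proof (rule symmetric_matrix_eqI)
  show "transpose (S (empirical {..<N} Y)) = S (empirical {..<N} Y)"
    using scatter_empirical_nnd[OF assms(1)] unfolding nnd_matrix_def by simp
qed (simp_all add: quadratic_form transpose_def vec_eq_iff)

lemma scatter_empirical_coefficients_eventually_zero: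
  fixes c :: "nat \<Rightarrow> real"
  assumes c_nonneg: "\<And>N. 2 \<le> N \<Longrightarrow> 0 \<le> c N"
    and c: "\<And>N Y a. 2 \<le> N \<Longrightarrow>
      a \<bullet> (S (empirical {..<N} Y) *v a) = c N * sum_sq_dev {..<N} (\<lambda>i. a \<bullet> Y i)"
  shows "\<exists>J. \<forall>N\<ge>J. c N = 0"
proof -
  fix k :: 'd
  define r where "r N = (if 0 < c N then sqrt (1 / (c N * sum_sq_dev {..<N} (indicator {0}))) else 0)"
    for N :: nat
  have diag: "axis k 1 \<bullet> (S (empirical {..<N} (\<lambda>i. if i = 0 then r N *\<^sub>R axis k 1 else 0)) *v axis k 1)
      = (if 0 < c N then 1 else 0)" if "2 \<le> N" for N
  proof -
    have "0 < sum_sq_dev {..<N} (indicator {0})"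
      using that by (intro sum_sq_dev_indicator_pos) auto
    then show ?thesis
      unfolding scatter_empirical_outlier[OF c[OF that]]
      using c_nonneg[OF that] by (cases "0 < c N") (simp_all add: r_def)
  qed
  have "(\<lambda>j. axis k 1 \<bullet> (S (empirical {..<j + 2}
      (\<lambda>i. if i = 0 then r (j + 2) *\<^sub>R axis k 1 else 0)) *v axis k 1)) \<longlonglongrightarrow> 0"
    unfolding axis_quadratic_form
    using tendsto_vec_nth[OF tendsto_vec_nth[OF scatter_empirical_outlier_tendsto_zero]] by simp
  then have "(\<lambda>j. if 0 < c (j + 2) then 1 else 0 :: real) \<longlonglongrightarrow> 0"
    by (simp only: diag le_add2)
  then have "\<forall>\<^sub>F j in sequentially. (if 0 < c (j + 2) then 1 else 0 :: real) < 1"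
    by (rule order_tendstoD(2)) simp
  then obtain J where J: "\<And>j. J \<le> j \<Longrightarrow> (if 0 < c (j + 2) then 1 else 0 :: real) < 1"
    unfolding eventually_sequentially by blast
  have "c N = 0" if "J + 2 \<le> N" for N
  proof -
    have "J \<le> N - 2" "N - 2 + 2 = N"
      using that by simp_all
    then have "\<not> 0 < c N"
      using J[of "N - 2"] by (cases "0 < c N") simp_all
    then show ?thesis
      using c_nonneg[of N] that by simp
  qed
  then show ?thesis
    by blast
qed

lemma scatter_empirical_eventually_zero:
  assumes "CARD('d) \<ge> 2"
  shows "\<exists>K::nat. \<forall>N\<ge>K. \<forall>Y. S (empirical {..<N} Y) = 0"
proof -
  have "\<forall>N::nat. \<exists>c. 2 \<le> N \<longrightarrow> 0 \<le> c \<and>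
      (\<forall>Y a. a \<bullet> (S (empirical {..<N} Y) *v a) = c * sum_sq_dev {..<N} (\<lambda>i. a \<bullet> Y i))"
    using scatter_empirical_sum_sq_dev[OF assms] by blast
  then obtain c :: "nat \<Rightarrow> real" where "\<forall>N. 2 \<le> N \<longrightarrow> 0 \<le> c N \<and>
      (\<forall>Y a. a \<bullet> (S (empirical {..<N} Y) *v a) = c N * sum_sq_dev {..<N} (\<lambda>i. a \<bullet> Y i))"
    by (rule choice[THEN exE]) blast
  then have c_nonneg: "\<And>N. 2 \<le> N \<Longrightarrow> 0 \<le> c N"
    and c: "\<And>N Y a. 2 \<le> N \<Longrightarrow>
      a \<bullet> (S (empirical {..<N} Y) *v a) = c N * sum_sq_dev {..<N} (\<lambda>i. a \<bullet> Y i)"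
    by blast+
  obtain J where J: "\<And>N. J \<le> N \<Longrightarrow> c N = 0"
    using scatter_empirical_coefficients_eventually_zero[OF c_nonneg c] by blast
  have "S (empirical {..<N} Y) = 0" if "max J 2 \<le> N" for N Y
    using that c[where N = N and Y = Y] J[of N] by (intro scatter_empirical_eq_zero) simp_all
  then show ?thesis
    by blast
qed

lemma scatter_all_empirical_zero:
  assumes "CARD('d) \<ge> 2" "Q \<in> all_empirical"
  shows "S Q = 0"
proof -
  obtain n :: nat and X :: "nat \<Rightarrow> real^'d" where Q: "Q = empirical {..<n} X" and "1 \<le> n"
    using assms(2) unfolding all_empirical_def by blast
  obtain K :: nat where K: "\<forall>N\<ge>K. \<forall>Y. S (empirical {..<N} Y) = 0"
    using scatter_empirical_eventually_zero[OF assms(1)] by blast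
  have "K \<le> Suc K * n"
    using \<open>1 \<le> n\<close> mult_le_mono2[of 1 n "Suc K"] by simp
  then have "S (empirical {..<Suc K * n} (\<lambda>j. X (j mod n))) = 0"
    using K by blast
  moreover have "empirical {..<Suc K * n} (\<lambda>j. X (j mod n)) = Q"
    unfolding Q by (rule empirical_replicate) (use \<open>1 \<le> n\<close> in simp_all)
  ultimately show ?thesis
    by simp
qed

end

theorem theorem5:
  assumes "CARD('d::finite) \<ge> 2"
  shows
   "(CARD('n::finite) \<ge> 2 \<longrightarrow>
      (\<forall>S :: (real^'d) measure \<Rightarrow> real^'d^'d.
        singularly_affinely_equivariant (range (data_emp :: real^'n^'d \<Rightarrow> _)) S \<longrightarrow>
        (\<exists>c\<ge>0. \<forall>X :: real^'n^'d.
           S (data_emp (centered X)) = c *\<^sub>R (centered X ** transpose (centered X)))))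
    \<and>
    (\<forall>S :: (real^'d) measure \<Rightarrow> real^'d^'d.
        affinely_equivariant all_empirical S \<and> weakly_continuous_on all_empirical S \<longrightarrow>
        (\<forall>Q\<in>all_empirical. S Q = 0))"
  using singularly_equivariant_scatter_centered[OF assms] scatter_all_empirical_zero[OF _ _ assms]
  by blast

end
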